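(* Let $p(z)$ be analytic in $\mathbb{D}$ with $p(0)=1$ and let $Q\in\mathcal{H}[1,n]$ satisfy $|Q(z)|<M$ in $\mathbb{D}$ for some $M>0$. Let $-1\leq B<A<1$ and $-1<E<D\leq 1$, and let $\alpha,\beta$ be numbers with $\alpha+\beta>0$ such that $$(A-B)(1-A)(1+E)>(1+|A|)\big(\beta+\alpha+|\beta A+\alpha B|\big)\big((1+D)(1-B)+M(1+E)(1-A)\big).$$ If $$p(z)Q(z)+\frac{zp'(z)}{\beta p(z)+\alpha}\prec\frac{1+Dz}{1+Ez},$$ then $p(z)\prec \dfrac{1+Az}{1+Bz}$.
   Context: $\mathbb{D}$ is the open unit disk. $\mathcal{H}[1,n]$ is the class of functions analytic in $\mathbb{D}$ of the form $1+a_nz^n+a_{n+1}z^{n+1}+\cdots$. $f\prec F$ means $f=F\circ\omega$ for some analytic $\omega:\mathbb{D}\to\mathbb{D}$ with $\omega(0)=0$. *)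

theory Defs
  imports "HOL-Complex_Analysis.Complex_Analysis"
begin

definition subordinate :: "(complex \<Rightarrow> complex) \<Rightarrow> (complex \<Rightarrow> complex) \<Rightarrow> bool" where
  "subordinate f F \<longleftrightarrow>
     (\<exists>w. w holomorphic_on ball 0 1 \<and> w ` ball 0 1 \<subseteq> ball 0 1 \<and> w 0 = 0 \<and>
          (\<forall>z\<in>ball 0 1. f z = F (w z)))"

text \<open>The class H[1,n]: analytic in the disk, of the form 1 + a_n z^n + a_(n+1) z^(n+1) + ...\<close>
definition H1n :: "nat \<Rightarrow> (complex \<Rightarrow> complex) \<Rightarrow> bool" where
  "H1n n Q \<longleftrightarrow> Q holomorphic_on ball 0 1 \<and> Q 0 = 1 \<and>
     (\<forall>k. 1 \<le> k \<and> k < n \<longrightarrow> (deriv ^^ k) Q 0 = 0)"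

end

theory Submission
  imports Defs
begin

(* With w = (p - 1) / (A - B p) one has p = (1 + A w) / (1 + B w), so p is subordinate to
   (1 + A z) / (1 + B z) as soon as |w| < 1 on the disk.  Otherwise let z0 be a point of least
   modulus where |w(z0)| = 1.  Jack's lemma gives |z0 w'(z0)| >= 1, which bounds |z0 p'(z0)| from
   below; with |Q| < M and the inequality between the parameters this pushes
   |p Q + z p' / (beta p + alpha)| at z0 above (1 + D) / (1 + E), the maximum modulus of
   (1 + D z) / (1 + E z) on the disk, contradicting the hypothesis. *)

lemma Moebius_inverse:
  fixes A B :: real and p w :: complex
  assumes "A \<noteq> B" and c: "of_real A - of_real B * p \<noteq> 0"
    and w: "w = (p - 1) / (of_real A - of_real B * p)"
  shows "(1 + of_real B * w) * (of_real A - of_real B * p) = of_real (A - B)"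
    and "p = (1 + of_real A * w) / (1 + of_real B * w)"
proof -
  show "(1 + of_real B * w) * (of_real A - of_real B * p) = of_real (A - B)"
    using c by (simp add: w field_simps)
  then have "1 + of_real B * w \<noteq> 0"
    using \<open>A \<noteq> B\<close> by auto
  moreover have "(1 + of_real A * w) * (of_real A - of_real B * p)
      = p * (1 + of_real B * w) * (of_real A - of_real B * p)"
    using c by (simp add: w field_simps)
  then have "1 + of_real A * w = p * (1 + of_real B * w)"
    using c by simp
  ultimately show "p = (1 + of_real A * w) / (1 + of_real B * w)"
    by (simp add: eq_divide_eq)
qed

lemma subordinate_Moebius_if_norm_less:
  fixes A B :: real
  assumes p: "p holomorphic_on ball 0 1" "p 0 = 1" and "A \<noteq> B"
    and less: "\<forall>z\<in>ball 0 1. norm (p z - 1) < norm (of_real A - of_real B * p z)"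
  shows "subordinate p (\<lambda>z. (1 + of_real A * z) / (1 + of_real B * z))"
proof -
  define w where "w z = (p z - 1) / (of_real A - of_real B * p z)" for z
  have c: "of_real A - of_real B * p z \<noteq> 0" if "z \<in> ball 0 1" for z
    using less that by force
  show ?thesis
    unfolding subordinate_def
  proof (intro exI conjI ballI)
    show "w holomorphic_on ball 0 1"
      unfolding w_def using p c by (intro holomorphic_intros) auto
    show "w ` ball 0 1 \<subseteq> ball 0 1"
      using less c by (auto simp: w_def norm_divide divide_less_eq)
    show "w 0 = 0"
      using p by (simp add: w_def)
    show "p z = (1 + of_real A * w z) / (1 + of_real B * w z)" if "z \<in> ball 0 1" for z
      using Moebius_inverse(2)[OF \<open>A \<noteq> B\<close> c[OF that]] by (simp add: w_def)
  qed
qed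

lemma continuous_on_ball_first_zero:
  fixes \<phi> :: "'a::{real_normed_vector,heine_borel} \<Rightarrow> real"
  assumes cont: "continuous_on (ball 0 R) \<phi>" and "0 < \<phi> 0"
    and z1: "z1 \<in> ball 0 R" "\<phi> z1 \<le> 0"
  obtains z0 where "z0 \<in> ball 0 R" "\<phi> z0 = 0" "\<forall>z\<in>ball 0 (norm z0). 0 < \<phi> z"
proof -
  define K where "K = cball 0 (norm z1) \<inter> \<phi> -` {..0}"
  have sub: "cball (0::'a) (norm z1) \<subseteq> ball 0 R"
    using z1 by auto
  have "closed K"
    unfolding K_def by (intro continuous_closed_preimage continuous_on_subset[OF cont sub]) auto
  then have "compact K"
    by (simp add: compact_eq_bounded_closed K_def bounded_Int)
  moreover have "K \<noteq> {}"
    using z1 by (auto simp: K_def)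
  ultimately obtain z0 where z0: "z0 \<in> K" and min: "\<forall>y\<in>K. norm z0 \<le> norm y"
    using continuous_attains_inf[of K norm] continuous_on_norm_id by blast
  have "z0 \<in> cball 0 (norm z1)" "\<phi> z0 \<le> 0"
    using z0 by (auto simp: K_def)
  then have "z0 \<in> ball 0 R"
    using sub by blast
  have pos: "\<forall>z\<in>ball 0 (norm z0). 0 < \<phi> z"
  proof (rule ballI, rule ccontr)
    fix z assume "z \<in> ball 0 (norm z0)" "\<not> 0 < \<phi> z"
    then have "z \<in> K"
      using \<open>z0 \<in> cball 0 (norm z1)\<close> by (auto simp: K_def)
    then show False
      using min \<open>z \<in> ball 0 (norm z0)\<close> by force
  qed
  have "z0 \<noteq> 0"
    using \<open>\<phi> z0 \<le> 0\<close> \<open>0 < \<phi> 0\<close> by auto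
  have "closure (ball (0::'a) (norm z0)) = cball 0 (norm z0)"
    using \<open>z0 \<noteq> 0\<close> by simp
  also have "\<dots> \<subseteq> cball 0 (norm z1)"
    using \<open>z0 \<in> cball 0 (norm z1)\<close> by (intro subset_cball) simp
  also have "\<dots> \<subseteq> ball 0 R"
    by (rule sub)
  finally have "closure (ball (0::'a) (norm z0)) \<subseteq> ball 0 R" .
  then have "0 \<le> \<phi> z0"
    by (rule continuous_ge_on_closure[OF continuous_on_subset[OF cont]])
      (use \<open>z0 \<noteq> 0\<close> pos in \<open>auto simp: less_imp_le\<close>)
  then show ?thesis
    using \<open>\<phi> z0 \<le> 0\<close> by (intro that[OF \<open>z0 \<in> ball 0 R\<close> _ pos]) simp
qed

lemma Schwarz_Lemma_ball:
  fixes w :: "complex \<Rightarrow> complex"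
  assumes hol: "w holomorphic_on ball 0 r" and "w 0 = 0"
    and lt1: "\<forall>z\<in>ball 0 r. norm (w z) < 1" and z: "norm z < r"
  shows "norm (w z) \<le> norm z / r"
proof -
  have r: "0 < r"
    using z norm_ge_zero[of z] by linarith
  have "(w \<circ> (\<lambda>\<xi>. of_real r * \<xi>)) holomorphic_on ball 0 1"
    by (rule holomorphic_on_compose_gen[OF _ hol]) (use r in \<open>auto simp: norm_mult\<close>)
  moreover have "norm ((w \<circ> (\<lambda>\<xi>. of_real r * \<xi>)) \<xi>) < 1" if "norm \<xi> < 1" for \<xi>
    using lt1 that r by (simp add: norm_mult)
  moreover have "norm (z / of_real r) < 1"
    using z r by (simp add: norm_divide)
  ultimately have "norm (w (of_real r * (z / of_real r))) \<le> norm (z / of_real r)"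
    using Schwarz_Lemma(1)[of "w \<circ> (\<lambda>\<xi>. of_real r * \<xi>)" "z / of_real r"] \<open>w 0 = 0\<close> by simp
  then show ?thesis
    using r by (simp add: norm_divide)
qed

lemma Jack_lemma:
  fixes w :: "complex \<Rightarrow> complex"
  assumes hol: "w holomorphic_on ball 0 r" and w0: "w 0 = 0"
    and lt1: "\<forall>z\<in>ball 0 r. norm (w z) < 1"
    and z0: "norm z0 = r" and wz0: "norm (w z0) = 1"
    and der: "(w has_field_derivative w') (at z0)"
  shows "1 \<le> norm (z0 * w')"
proof -
  have "z0 \<noteq> 0"
    using wz0 w0 by auto
  then have r: "0 < r"
    using z0 by auto
  have radial: "norm (w (of_real t * z0)) \<le> t" if "0 < t" "t < 1" for t
    using Schwarz_Lemma_ball[OF hol w0 lt1, of "of_real t * z0"] that r z0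
    by (simp add: norm_mult)
  define q where "q = (\<lambda>y. (w y - w z0) / (y - z0))"
  have q: "(q \<longlongrightarrow> w') (at z0)"
    using der by (simp add: has_field_derivative_iff q_def)
  moreover have radial_lim: "filterlim (\<lambda>t. of_real t * z0) (at z0) (at_left 1)"
  proof (rule filterlim_atI)
    show "((\<lambda>t. of_real t * z0) \<longlongrightarrow> z0) (at_left 1)"
      by (auto intro!: tendsto_eq_intros)
    show "\<forall>\<^sub>F t in at_left 1. of_real t * z0 \<noteq> z0"
      using eventually_at_left_real[OF zero_less_one]
      by eventually_elim (use \<open>z0 \<noteq> 0\<close> in auto)
  qed
  ultimately have "((\<lambda>t. norm (z0 * q (of_real t * z0))) \<longlongrightarrow> norm (z0 * w')) (at_left 1)"
    by (intro tendsto_norm tendsto_mult_left filterlim_compose[OF q radial_lim])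
  moreover have "\<forall>\<^sub>F t in at_left 1. 1 \<le> norm (z0 * q (of_real t * z0))"
    using eventually_at_left_real[OF zero_less_one]
  proof eventually_elim
    case (elim t)
    then have "1 - t \<le> norm (w (of_real t * z0) - w z0)"
      using radial[of t] wz0 norm_triangle_ineq3[of "w z0" "w (of_real t * z0)"]
      by (simp add: norm_minus_commute)
    moreover have "of_real t * z0 - z0 = of_real (t - 1) * z0"
      by (simp add: algebra_simps)
    then have "norm (of_real t * z0 - z0) = (1 - t) * r"
      using elim z0 by (simp add: norm_mult del: of_real_diff)
    ultimately show ?case
      using elim r z0 by (simp add: q_def norm_mult norm_divide)
  qed
  ultimately show ?thesis
    by (rule tendsto_lowerbound) simp
qed

lemma has_field_derivative_Moebius_inverse:
  fixes A B :: real
  assumes p: "(p has_field_derivative p') (at z)" and c: "of_real A - of_real B * p z \<noteq> 0"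
  shows "((\<lambda>z. (p z - 1) / (of_real A - of_real B * p z)) has_field_derivative
    p' * of_real (A - B) / (of_real A - of_real B * p z) ^ 2) (at z)"
proof -
  have "((\<lambda>z. (p z - 1) / (of_real A - of_real B * p z)) has_field_derivative
      (p' * (of_real A - of_real B * p z) - (p z - 1) * (- of_real B * p'))
        / ((of_real A - of_real B * p z) * (of_real A - of_real B * p z))) (at z)"
    using p c by (intro DERIV_divide derivative_eq_intros) auto
  then show ?thesis
    by (simp add: power2_eq_square algebra_simps)
qed

lemma Jack_lemma_Moebius_at:
  fixes A B :: real
  assumes p: "p holomorphic_on ball 0 1" "p 0 = 1" and "A \<noteq> B" and z0: "z0 \<in> ball 0 1"
    and less: "\<forall>z\<in>ball 0 (norm z0). norm (p z - 1) < norm (of_real A - of_real B * p z)"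
    and eq: "norm (p z0 - 1) = norm (of_real A - of_real B * p z0)"
  obtains w0 where "norm w0 = 1" "1 + of_real B * w0 \<noteq> 0"
    and "p z0 = (1 + of_real A * w0) / (1 + of_real B * w0)"
    and "\<bar>A - B\<bar> / norm (1 + of_real B * w0) ^ 2 \<le> norm (z0 * deriv p z0)"
proof -
  define w where "w z = (p z - 1) / (of_real A - of_real B * p z)" for z
  have c: "of_real A - of_real B * p z0 \<noteq> 0"
  proof
    assume "of_real A - of_real B * p z0 = 0"
    moreover from this have "p z0 = 1"
      using eq by simp
    ultimately show False
      using \<open>A \<noteq> B\<close> by simp
  qed
  note inv = Moebius_inverse[OF \<open>A \<noteq> B\<close> c w_def[of z0]]
  have "norm (w z0) = 1" and u: "1 + of_real B * w z0 \<noteq> 0"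
    using eq c inv(1) \<open>A \<noteq> B\<close> by (auto simp: w_def norm_divide)
  have nz: "of_real A - of_real B * p z \<noteq> 0" if "z \<in> ball 0 (norm z0)" for z
    using less that by force
  have sub: "ball 0 (norm z0) \<subseteq> ball 0 1"
    using z0 by auto
  have "1 \<le> norm (z0 * (deriv p z0 * (1 + of_real B * w z0) ^ 2 / of_real (A - B)))"
  proof (rule Jack_lemma[of w "norm z0"])
    show "w holomorphic_on ball 0 (norm z0)"
      unfolding w_def using holomorphic_on_subset[OF p(1) sub] nz
      by (intro holomorphic_intros) auto
    show "\<forall>z\<in>ball 0 (norm z0). norm (w z) < 1"
      using less nz by (simp add: w_def norm_divide)
    have "(w has_field_derivative
        deriv p z0 * of_real (A - B) / (of_real A - of_real B * p z0) ^ 2) (at z0)"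
      unfolding w_def
      by (rule has_field_derivative_Moebius_inverse[OF holomorphic_derivI[OF p(1) open_ball z0] c])
    also have "deriv p z0 * of_real (A - B) / (of_real A - of_real B * p z0) ^ 2
        = deriv p z0 * (1 + of_real B * w z0) ^ 2 / of_real (A - B)"
      unfolding inv(1)[symmetric] using c u by (simp add: power2_eq_square)
    finally show "(w has_field_derivative deriv p z0 * (1 + of_real B * w z0) ^ 2 / of_real (A - B))
        (at z0)" .
  qed (use p \<open>norm (w z0) = 1\<close> in \<open>simp_all add: w_def\<close>)
  also have "\<dots> = norm (z0 * deriv p z0) * norm (1 + of_real B * w z0) ^ 2 / \<bar>A - B\<bar>"
    by (simp add: norm_mult norm_divide norm_power del: of_real_diff)
  finally have "\<bar>A - B\<bar> / norm (1 + of_real B * w z0) ^ 2 \<le> norm (z0 * deriv p z0)"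
    using u \<open>A \<noteq> B\<close> by (simp add: pos_le_divide_eq pos_divide_le_eq)
  from that[OF \<open>norm (w z0) = 1\<close> u inv(2) this] show ?thesis .
qed

lemma Jack_lemma_Moebius:
  fixes A B :: real
  assumes p: "p holomorphic_on ball 0 1" "p 0 = 1" and "A \<noteq> B"
    and not_sub: "\<not> subordinate p (\<lambda>z. (1 + of_real A * z) / (1 + of_real B * z))"
  obtains z0 w0 where "z0 \<in> ball 0 1" "norm w0 = 1" "1 + of_real B * w0 \<noteq> 0"
    and "p z0 = (1 + of_real A * w0) / (1 + of_real B * w0)"
    and "\<bar>A - B\<bar> / norm (1 + of_real B * w0) ^ 2 \<le> norm (z0 * deriv p z0)"
proof -
  define \<phi> where "\<phi> z = norm (of_real A - of_real B * p z) - norm (p z - 1)" for z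
  obtain z1 where "z1 \<in> ball 0 1" "\<phi> z1 \<le> 0"
    using subordinate_Moebius_if_norm_less[OF p \<open>A \<noteq> B\<close>] not_sub
    by (force simp: \<phi>_def not_less)
  moreover have "continuous_on (ball 0 1) \<phi>"
    unfolding \<phi>_def using holomorphic_on_imp_continuous_on[OF p(1)]
    by (intro continuous_intros)
  moreover have "0 < \<phi> 0"
    using \<open>A \<noteq> B\<close> by (simp add: \<phi>_def p(2) del: of_real_diff)
  ultimately obtain z0 where z0: "z0 \<in> ball 0 1" "\<phi> z0 = 0" "\<forall>z\<in>ball 0 (norm z0). 0 < \<phi> z"
    using continuous_on_ball_first_zero by metis
  obtain w0 where "norm w0 = 1" "1 + of_real B * w0 \<noteq> 0"
    "p z0 = (1 + of_real A * w0) / (1 + of_real B * w0)"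
    "\<bar>A - B\<bar> / norm (1 + of_real B * w0) ^ 2 \<le> norm (z0 * deriv p z0)"
    by (rule Jack_lemma_Moebius_at[OF p \<open>A \<noteq> B\<close> z0(1)]) (use z0 in \<open>auto simp: \<phi>_def\<close>)
  with z0(1) that show ?thesis
    by blast
qed


lemma norm_Moebius_le:
  fixes D E :: real and z :: complex
  assumes z: "norm z < 1" and ED: "-1 < E" "E < D" "D \<le> 1"
  shows "norm ((1 + of_real D * z) / (1 + of_real E * z)) \<le> (1 + D) / (1 + E)"
proof -
  have norm_sq: "norm (1 + of_real c * z) ^ 2 = 1 + 2 * c * Re z + c\<^sup>2 * norm z ^ 2" for c :: real
    unfolding cmod_power2 by (simp add: power2_eq_square algebra_simps)
  define s x where "s = norm z" and "x = Re z"
  have s: "0 \<le> s" "s < 1" "x \<le> s"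
    using z complex_Re_le_cmod by (auto simp: s_def x_def)
  have "\<bar>D * E\<bar> < 1"
    using ED by (simp add: abs_mult) (smt (verit) mult_le_one abs_ge_zero mult_left_le_one_le)
  \<comment> \<open>The difference of the squared cross-multiplied moduli is \<open>D - E\<close> times nonnegative terms.\<close>
  have "0 \<le> (1 - s)\<^sup>2 * (2 + D + E)" "0 \<le> 2 * s * (1 - s) * (1 + D) * (1 + E)"
      "0 \<le> 2 * (1 - D * E) * (s - x)"
    using s ED \<open>\<bar>D * E\<bar> < 1\<close> by (intro mult_nonneg_nonneg; simp)+
  then have "0 \<le> (D - E) * ((1 - s)\<^sup>2 * (2 + D + E) + 2 * s * (1 - s) * (1 + D) * (1 + E)
                + 2 * (1 - D * E) * (s - x))"
    using ED by (intro mult_nonneg_nonneg) auto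
  also have "\<dots> = (1 + D)\<^sup>2 * (1 + 2 * E * x + E\<^sup>2 * s\<^sup>2) - (1 + E)\<^sup>2 * (1 + 2 * D * x + D\<^sup>2 * s\<^sup>2)"
    by (simp add: power2_eq_square algebra_simps)
  finally have "(1 + E)\<^sup>2 * norm (1 + of_real D * z) ^ 2 \<le> (1 + D)\<^sup>2 * norm (1 + of_real E * z) ^ 2"
    unfolding norm_sq s_def x_def by linarith
  then have "(norm (1 + of_real D * z) * (1 + E))\<^sup>2 \<le> ((1 + D) * norm (1 + of_real E * z))\<^sup>2"
    by (simp add: power_mult_distrib mult_ac)
  then have "norm (1 + of_real D * z) * (1 + E) \<le> (1 + D) * norm (1 + of_real E * z)"
    by (rule power2_le_imp_le) (use ED in simp)
  moreover have "1 + of_real E * z \<noteq> 0"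
  proof
    assume "1 + of_real E * z = 0"
    then have "norm (of_real E * z) = 1"
      by (metis add_eq_0_iff norm_minus_cancel norm_one)
    moreover have "\<bar>E\<bar> * norm z < 1"
      using ED z by (smt (verit) mult_left_le_one_le norm_ge_zero)
    ultimately show False by (simp add: norm_mult)
  qed
  ultimately show ?thesis
    using ED by (simp add: norm_divide pos_divide_le_eq pos_le_divide_eq)
qed

lemma subordinate_Moebius_norm_le:
  fixes D E :: real
  assumes "subordinate f (\<lambda>z. (1 + of_real D * z) / (1 + of_real E * z))"
    and "-1 < E" "E < D" "D \<le> 1" and "z \<in> ball 0 1"
  shows "norm (f z) \<le> (1 + D) / (1 + E)"
proof -
  obtain \<omega> where "\<omega> ` ball 0 1 \<subseteq> ball 0 1"
    and "\<forall>z\<in>ball 0 1. f z = (1 + of_real D * \<omega> z) / (1 + of_real E * \<omega> z)"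
    using assms(1) unfolding subordinate_def by blast
  moreover have "\<omega> z \<in> ball 0 1"
    using \<open>\<omega> ` ball 0 1 \<subseteq> ball 0 1\<close> assms(5) by blast
  ultimately show ?thesis
    using assms(2-5) norm_Moebius_le[of "\<omega> z" E D] by simp
qed

lemma norm_real_Moebius_on_circle_le:
  fixes a b B :: real and w :: complex
  assumes "norm w = 1"
  shows "norm ((of_real a + of_real b * w) / (1 + of_real B * w))
    \<le> (\<bar>a\<bar> + \<bar>b\<bar>) / norm (1 + of_real B * w)"
  using norm_triangle_ineq[of "of_real a" "of_real b * w"] assms
  by (simp add: norm_divide norm_mult divide_right_mono)

lemma Moebius_parameter_bound:
  fixes A B D E M S u :: real
  assumes AB: "B < A" "A < 1" and DE: "-1 \<le> D" "-1 < E" and S: "0 < S"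
    and u: "0 < u" "u \<le> 1 + \<bar>B\<bar>"
    and ineq: "(A - B) * (1 - A) * (1 + E) >
        (1 + \<bar>A\<bar>) * S * ((1 + D) * (1 - B) + M * (1 + E) * (1 - A))"
  shows "(1 + D) / (1 + E) < ((A - B) / S - (1 + \<bar>A\<bar>) * M) / u"
proof -
  have "(1 + \<bar>B\<bar>) * (1 - A) \<le> (1 + \<bar>A\<bar>) * (1 - B)"
  proof (cases "0 \<le> B")
    case True
    then show ?thesis
      using AB by (simp add: algebra_simps)
  next
    case False
    then show ?thesis
      using AB by (simp add: mult.commute mult_left_mono)
  qed
  then have "u * (1 - A) \<le> (1 + \<bar>A\<bar>) * (1 - B)"
    using u AB mult_right_mono[of u "1 + \<bar>B\<bar>" "1 - A"] by linarith
  then have "u \<le> (1 + \<bar>A\<bar>) * (1 - B) / (1 - A)"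
    using AB by (simp add: pos_le_divide_eq)
  then have "u * (1 + D) / (1 + E) \<le> (1 + \<bar>A\<bar>) * (1 - B) / (1 - A) * (1 + D) / (1 + E)"
    using DE by (intro divide_right_mono mult_right_mono) auto
  also have "\<dots> < (A - B) / S - (1 + \<bar>A\<bar>) * M"
  proof -
    have clear_denominators: "d * b / (c * e) + m < x / s"
      if "0 < s" "0 < c" "0 < e" "s * (d * b + m * e * c) < x * c * e" for x s c e d b m :: real
      using that by (simp add: field_simps)
    have "(1 + D) * ((1 + \<bar>A\<bar>) * (1 - B)) / ((1 - A) * (1 + E)) + (1 + \<bar>A\<bar>) * M < (A - B) / S"
      by (rule clear_denominators) (use ineq S AB DE in \<open>simp_all add: algebra_simps\<close>)
    then show ?thesis
      by (simp add: field_simps)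
  qed
  finally show ?thesis
    using u by (simp add: field_simps)
qed

lemma boundary_value_norm_gt:
  fixes A B D E M \<alpha> \<beta> :: real and w0 p q zp :: complex
  assumes AB: "B < A" "A < 1" and DE: "-1 \<le> D" "-1 < E" and "0 < \<alpha> + \<beta>"
    and ineq: "(A - B) * (1 - A) * (1 + E) >
        (1 + \<bar>A\<bar>) * (\<beta> + \<alpha> + \<bar>\<beta> * A + \<alpha> * B\<bar>) *
        ((1 + D) * (1 - B) + M * (1 + E) * (1 - A))"
    and w0: "norm w0 = 1" "1 + of_real B * w0 \<noteq> 0"
    and p: "p = (1 + of_real A * w0) / (1 + of_real B * w0)"
    and q: "norm q < M"
    and zp: "(A - B) / norm (1 + of_real B * w0) ^ 2 \<le> norm zp"
    and den: "of_real \<beta> * p + of_real \<alpha> \<noteq> 0"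
  shows "(1 + D) / (1 + E) < norm (p * q + zp / (of_real \<beta> * p + of_real \<alpha>))"
proof -
  define u where "u = norm (1 + of_real B * w0)"
  define S where "S = \<beta> + \<alpha> + \<bar>\<beta> * A + \<alpha> * B\<bar>"
  have u: "0 < u" "u \<le> 1 + \<bar>B\<bar>"
    using w0 norm_triangle_ineq[of 1 "of_real B * w0"] by (auto simp: u_def norm_mult)
  have S: "0 < S"
    using \<open>0 < \<alpha> + \<beta>\<close> abs_ge_zero[of "\<beta> * A + \<alpha> * B"] unfolding S_def by linarith
  have norm_p: "norm p \<le> (1 + \<bar>A\<bar>) / u"
    using norm_real_Moebius_on_circle_le[OF w0(1), of 1 A B] by (simp add: p u_def)
  have "of_real \<beta> * p + of_real \<alpha>
      = (of_real (\<alpha> + \<beta>) + of_real (\<beta> * A + \<alpha> * B) * w0) / (1 + of_real B * w0)"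
    using w0(2) by (simp add: p field_simps)
  then have "norm (of_real \<beta> * p + of_real \<alpha>) \<le> (\<bar>\<alpha> + \<beta>\<bar> + \<bar>\<beta> * A + \<alpha> * B\<bar>) / u"
    unfolding u_def by (simp only: norm_real_Moebius_on_circle_le[OF w0(1)])
  then have norm_den: "norm (of_real \<beta> * p + of_real \<alpha>) \<le> S / u"
    using \<open>0 < \<alpha> + \<beta>\<close> by (simp add: S_def add.commute)
  have "(A - B) / (S * u) = ((A - B) / u ^ 2) / (S / u)"
    using u S by (simp add: field_simps power2_eq_square)
  also have "\<dots> \<le> norm zp / norm (of_real \<beta> * p + of_real \<alpha>)"
    by (rule frac_le) (use zp norm_den den AB u in \<open>auto simp: u_def\<close>)
  finally have quot: "(A - B) / (S * u) \<le> norm (zp / (of_real \<beta> * p + of_real \<alpha>))"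
    by (simp add: norm_divide)
  have "norm p * norm q \<le> (1 + \<bar>A\<bar>) / u * M"
    using norm_p q u by (intro mult_mono) auto
  then have prod: "norm (p * q) \<le> (1 + \<bar>A\<bar>) * M / u"
    by (simp add: norm_mult)
  have "(1 + D) / (1 + E) < ((A - B) / S - (1 + \<bar>A\<bar>) * M) / u"
    using AB DE S u ineq[folded S_def] by (rule Moebius_parameter_bound)
  also have "\<dots> = (A - B) / (S * u) - (1 + \<bar>A\<bar>) * M / u"
    by (simp add: diff_divide_distrib)
  also have "\<dots> \<le> norm (zp / (of_real \<beta> * p + of_real \<alpha>)) - norm (p * q)"
    using quot prod by linarith
  also have "\<dots> \<le> norm (p * q + zp / (of_real \<beta> * p + of_real \<alpha>))"
    by (metis add.commute norm_diff_ineq)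
  finally show ?thesis .
qed

theorem mainTheorem2:
  fixes p Q :: "complex \<Rightarrow> complex"
    and n :: nat and M A B D E \<alpha> \<beta> :: real
  assumes n: "n \<ge> 1"
    and p_hol: "p holomorphic_on ball 0 1" and p0: "p 0 = 1"
    and Q: "H1n n Q" and QM: "\<forall>z\<in>ball 0 1. norm (Q z) < M" and M: "M > 0"
    and AB: "-1 \<le> B" "B < A" "A < 1"
    and ED: "-1 < E" "E < D" "D \<le> 1"
    and ab: "\<alpha> + \<beta> > 0"
    and ineq: "(A - B) * (1 - A) * (1 + E) >
        (1 + \<bar>A\<bar>) * (\<beta> + \<alpha> + \<bar>\<beta> * A + \<alpha> * B\<bar>) *
        ((1 + D) * (1 - B) + M * (1 + E) * (1 - A))"
    and denom: "\<forall>z\<in>ball 0 1. of_real \<beta> * p z + of_real \<alpha> \<noteq> 0"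
    and sub: "subordinate (\<lambda>z. p z * Q z + z * deriv p z / (of_real \<beta> * p z + of_real \<alpha>))
                          (\<lambda>z. (1 + of_real D * z) / (1 + of_real E * z))"
  shows "subordinate p (\<lambda>z. (1 + of_real A * z) / (1 + of_real B * z))"
proof (rule ccontr)
  assume not_sub: "\<not> ?thesis"
  have "A \<noteq> B"
    using AB by simp
  obtain z0 w0 where z0: "z0 \<in> ball 0 1" and w0: "norm w0 = 1"
      "1 + of_real B * w0 \<noteq> 0" "p z0 = (1 + of_real A * w0) / (1 + of_real B * w0)"
      "\<bar>A - B\<bar> / norm (1 + of_real B * w0) ^ 2 \<le> norm (z0 * deriv p z0)"
    by (rule Jack_lemma_Moebius[OF p_hol p0 \<open>A \<noteq> B\<close> not_sub])
  have "(1 + D) / (1 + E) < norm (p z0 * Q z0 + z0 * deriv p z0 / (of_real \<beta> * p z0 + of_real \<alpha>))"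
    by (rule boundary_value_norm_gt[OF _ _ _ _ ab ineq w0(1-3)])
      (use AB ED QM denom z0 w0(4) in auto)
  moreover have "norm (p z0 * Q z0 + z0 * deriv p z0 / (of_real \<beta> * p z0 + of_real \<alpha>))
      \<le> (1 + D) / (1 + E)"
    using subordinate_Moebius_norm_le[OF sub ED z0] by simp
  ultimately show False
    by linarith
qed

end
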